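(* Let $\mathscr{C}=\left\{\sum_{i=1}^{\infty} t_i 3^{-i} : t_i\in\{0,2\}\right\}$ be the middle-third Cantor set and $\mathscr{C}^{(2)}=\{x^2 : x\in\mathscr{C}\}$. For every integer $k\geq 2$, the interval \[\left[\tfrac{36}{81}+\tfrac{8}{9}\cdot\tfrac{1}{3^{2k}}+\tfrac{1}{3^{2k}},\ \tfrac{36}{81}+\tfrac{4}{3^{2k+1}}+\tfrac{1}{3^{4k}}+\tfrac{2}{3^{2k}}+\tfrac{4}{9}\cdot\tfrac{1}{3^{2k}}\right]\] is contained in $\mathscr{C}^{(2)}+\mathscr{C}^{(2)}+\mathscr{C}^{(2)}+\mathscr{C}^{(2)}=\{y_1+y_2+y_3+y_4 : y_j\in\mathscr{C}^{(2)}\}$. *)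

theory Defs
  imports Complex_Main
begin

definition cantor_set :: "real set" where
  "cantor_set = {x. \<exists>t::nat \<Rightarrow> real. (\<forall>i. t i \<in> {0, 2}) \<and>
                      x = (\<Sum>i. t (Suc i) / 3 ^ (Suc i))}"

definition cantor_sq :: "real set" where
  "cantor_sq = {x ^ 2 | x. x \<in> cantor_set}"

end

theory Submission
  imports Defs
begin

(*
  Every y in [0, m], m >= 4, is a sum of m squares of Cantor points; the interval of the
  theorem lies in [0, 4]. Keep m Cantor cylinders [a_j, a_j + h_j] with
  sum a_j^2 <= y <= sum (a_j + h_j)^2, and replace the cylinder whose squared image has the
  largest width w = (2 a_j + h_j) h_j by its left or its right third. One of the two choices
  keeps y bracketed: the gap between the two ranges of sums is w/3, whereas the other m - 1 >= 3
  widths are at least w/9 each, as long as all widths stay within a factor 9 of each other,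
  which the subdivision preserves. Every step shrinks the total width by the factor
  1 - 4/(9m), so the nested cylinders converge to Cantor points whose squares sum to y.
*)

definition ternary :: "(nat \<Rightarrow> real) \<Rightarrow> real" where
  "ternary t = (\<Sum>i. t i / 3 ^ Suc i)"

lemma ternary_in_cantor_set:
  assumes "\<forall>i. t i \<in> {0, 2}"
  shows "ternary t \<in> cantor_set"
proof -
  define t' where "t' i = (if i = 0 then 0 else t (i - 1))" for i
  have "\<forall>i. t' i \<in> {0, 2}" and "ternary t = (\<Sum>i. t' (Suc i) / 3 ^ Suc i)"
    using assms by (auto simp: t'_def ternary_def)
  then show ?thesis unfolding cantor_set_def by blast
qed

lemma two_over_powers_of_three_sums: "(\<lambda>i. 2 / 3 ^ Suc (i + m)) sums (1 / 3 ^ m :: real)"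
proof -
  have "(\<lambda>i. 2 / 3 ^ Suc m * (1/3) ^ i) sums (2 / 3 ^ Suc m * (1 / (1 - 1/3)) :: real)"
    by (intro sums_mult geometric_sums) simp
  then show ?thesis by (simp add: power_add power_divide field_simps)
qed

lemma ternary_prefix_bounds:
  assumes "\<forall>i. t i \<in> {0, 2}"
  shows "(\<Sum>i<m. t i / 3 ^ Suc i) \<le> ternary t"
    and "ternary t \<le> (\<Sum>i<m. t i / 3 ^ Suc i) + 1 / 3 ^ m"
proof -
  define f where "f i = t i / 3 ^ Suc i" for i
  have f_bounds: "0 \<le> f i" "f i \<le> 2 / 3 ^ Suc i" for i
    using assms[rule_format, of i] unfolding f_def by auto
  have "summable (\<lambda>i. 2 / 3 ^ Suc i :: real)"
    using two_over_powers_of_three_sums[of 0] by (simp add: sums_iff)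
  then have "summable f"
    by (rule summable_comparison_test'[where N = 0]) (use f_bounds in auto)
  then have split: "ternary t = (\<Sum>i. f (i + m)) + (\<Sum>i<m. f i)"
    and tail: "summable (\<lambda>i. f (i + m))"
    unfolding ternary_def f_def[symmetric]
    by (auto simp: suminf_split_initial_segment summable_ignore_initial_segment)
  have "0 \<le> (\<Sum>i. f (i + m))"
    using tail f_bounds by (intro suminf_nonneg) auto
  moreover have "(\<Sum>i. f (i + m)) \<le> 1 / 3 ^ m"
    using f_bounds(2) by (rule sums_le[OF _ summable_sums[OF tail] two_over_powers_of_three_sums])
  ultimately show "(\<Sum>i<m. t i / 3 ^ Suc i) \<le> ternary t"
    and "ternary t \<le> (\<Sum>i<m. t i / 3 ^ Suc i) + 1 / 3 ^ m"
    using split unfolding f_def by simp_all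
qed

lemma prefix_stable_limit:
  fixes d :: "nat \<Rightarrow> nat \<Rightarrow> 'a" and len :: "nat \<Rightarrow> nat"
  assumes grow: "\<And>n. len n \<le> len (Suc n)" and stable: "\<And>n i. i < len n \<Longrightarrow> d (Suc n) i = d n i"
  obtains D where "\<And>n i. i < len n \<Longrightarrow> D i = d n i" and "\<And>i. \<exists>n. D i = d n i"
proof
  have later: "d (n + k) i = d n i" if "i < len n" for n k i
  proof (induction k)
    case (Suc k)
    have "len n \<le> len (n + k)" using grow by (rule lift_Suc_mono_le) simp
    then show ?case using Suc stable[of i "n + k"] that by simp
  qed simp
  define D where "D i = d (SOME n. i < len n) i" for i
  show "D i = d n i" if "i < len n" for n i
  proof -
    have "i < len (SOME n. i < len n)" using that by (rule someI)
    then show ?thesis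
      unfolding D_def using later[OF that] later by (metis add.commute)
  qed
  show "\<exists>n. D i = d n i" for i unfolding D_def by blast
qed

lemma eq_if_abs_diff_le_geometric:
  fixes a b C q :: real
  assumes "0 \<le> q" "q < 1" and bound: "\<And>n. \<bar>a - b\<bar> \<le> C * q ^ n"
  shows "a = b"
proof -
  have "(\<lambda>n. C * q ^ n) \<longlonglongrightarrow> 0"
    using assms(1,2) by (intro tendsto_mult_right_zero LIMSEQ_power_zero) simp
  then have "\<bar>a - b\<bar> \<le> 0"
    using bound by (intro LIMSEQ_le_const) auto
  then show ?thesis by simp
qed

(*
  Coordinate j is the Cantor cylinder of level depth s j with ternary digits
  digit s j 0, ..., digit s j (depth s j - 1), i.e. the interval
  [left_end s j, left_end s j + cyl_len s j]; digits at positions >= depth s j are ignored.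
*)
record cylinders =
  digit :: "nat \<Rightarrow> nat \<Rightarrow> real"
  depth :: "nat \<Rightarrow> nat"

definition left_end :: "cylinders \<Rightarrow> nat \<Rightarrow> real" where
  "left_end s j = (\<Sum>i<depth s j. digit s j i / 3 ^ Suc i)"

definition cyl_len :: "cylinders \<Rightarrow> nat \<Rightarrow> real" where
  "cyl_len s j = 1 / 3 ^ depth s j"

definition sq_width :: "cylinders \<Rightarrow> nat \<Rightarrow> real" where
  "sq_width s j = (2 * left_end s j + cyl_len s j) * cyl_len s j"

definition lower_sum :: "nat \<Rightarrow> cylinders \<Rightarrow> real" where
  "lower_sum m s = (\<Sum>j<m. left_end s j ^ 2)"

definition upper_sum :: "nat \<Rightarrow> cylinders \<Rightarrow> real" where
  "upper_sum m s = (\<Sum>j<m. (left_end s j + cyl_len s j) ^ 2)"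

definition total_width :: "nat \<Rightarrow> cylinders \<Rightarrow> real" where
  "total_width m s = (\<Sum>j<m. sq_width s j)"

definition cantor_digits :: "cylinders \<Rightarrow> bool" where
  "cantor_digits s \<longleftrightarrow> (\<forall>j i. digit s j i \<in> {0, 2})"

definition balanced :: "nat \<Rightarrow> cylinders \<Rightarrow> bool" where
  "balanced m s \<longleftrightarrow> (\<forall>j<m. \<forall>l<m. sq_width s j \<le> 9 * sq_width s l)"

definition widest :: "nat \<Rightarrow> cylinders \<Rightarrow> nat" where
  "widest m s = arg_max_on (sq_width s) {..<m}"

definition subdivide :: "cylinders \<Rightarrow> nat \<Rightarrow> real \<Rightarrow> cylinders" where
  "subdivide s i c = s\<lparr>digit := (digit s)(i := (digit s i)(depth s i := c)),
                       depth := (depth s)(i := Suc (depth s i))\<rparr>"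

definition refine :: "nat \<Rightarrow> real \<Rightarrow> cylinders \<Rightarrow> cylinders" where
  "refine m y s = (let i = widest m s in
     if y \<le> upper_sum m (subdivide s i 0) then subdivide s i 0 else subdivide s i 2)"

definition cylinder_seq :: "nat \<Rightarrow> real \<Rightarrow> nat \<Rightarrow> cylinders" where
  "cylinder_seq m y n = (refine m y ^^ n) \<lparr>digit = \<lambda>j i. 0, depth = \<lambda>j. 0\<rparr>"

lemma left_end_subdivide [simp]:
  "left_end (subdivide s i c) j = (if j = i then left_end s i + c * cyl_len s i / 3 else left_end s j)"
  unfolding left_end_def cyl_len_def subdivide_def by (auto simp: sum.lessThan_Suc intro!: sum.cong)

lemma cyl_len_subdivide [simp]:
  "cyl_len (subdivide s i c) j = (if j = i then cyl_len s i / 3 else cyl_len s j)"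
  unfolding cyl_len_def subdivide_def by auto

lemma sq_width_subdivide_other [simp]: "j \<noteq> i \<Longrightarrow> sq_width (subdivide s i c) j = sq_width s j"
  unfolding sq_width_def by simp

lemma cantor_digits_subdivide: "cantor_digits s \<Longrightarrow> c \<in> {0, 2} \<Longrightarrow> cantor_digits (subdivide s i c)"
  unfolding cantor_digits_def subdivide_def by auto

lemma left_end_nonneg:
  assumes "cantor_digits s"
  shows "0 \<le> left_end s j"
proof -
  have "0 \<le> digit s j i" for i
    using assms unfolding cantor_digits_def by (metis empty_iff insert_iff order_refl zero_le_numeral)
  then show ?thesis unfolding left_end_def by (simp add: sum_nonneg)
qed

lemma cyl_len_pos: "0 < cyl_len s j"
  unfolding cyl_len_def by simp

lemma sq_width_nonneg: "cantor_digits s \<Longrightarrow> 0 \<le> sq_width s j"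
  unfolding sq_width_def using left_end_nonneg cyl_len_pos by (simp add: less_imp_le)

lemma upper_sum_minus_lower_sum: "upper_sum m s - lower_sum m s = total_width m s"
  unfolding upper_sum_def lower_sum_def total_width_def sq_width_def
  by (simp add: sum_subtractf[symmetric] power2_eq_square algebra_simps)

lemma widest:
  assumes "0 < m"
  shows "widest m s < m" and "\<And>j. j < m \<Longrightarrow> sq_width s j \<le> sq_width s (widest m s)"
proof -
  obtain i where i: "i < m" "sq_width s i = Max (sq_width s ` {..<m})"
  proof -
    have "Max (sq_width s ` {..<m}) \<in> sq_width s ` {..<m}"
      using assms by (intro Max_in) auto
    then show thesis using that by auto
  qed
  then have "is_arg_max (sq_width s) (\<lambda>j. j \<in> {..<m}) i"
    by (auto simp: is_arg_max_linorder)
  then have "is_arg_max (sq_width s) (\<lambda>j. j \<in> {..<m}) (widest m s)"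
    unfolding widest_def arg_max_on_def arg_max_def by (rule someI)
  then show "widest m s < m" and "\<And>j. j < m \<Longrightarrow> sq_width s j \<le> sq_width s (widest m s)"
    by (auto simp: is_arg_max_linorder)
qed

lemma sq_width_subdivide_bounds:
  assumes "0 \<le> left_end s i" and "c \<in> {0, 2}"
  shows "sq_width s i / 9 \<le> sq_width (subdivide s i c) i"
    and "sq_width (subdivide s i c) i \<le> 5/9 * sq_width s i"
proof -
  define a h where "a = left_end s i" and "h = cyl_len s i"
  have "0 \<le> a * h" "0 \<le> h * h"
    using assms(1) cyl_len_pos[of s i] unfolding a_def h_def by simp_all
  moreover have "sq_width (subdivide s i c) i = 2/3 * (a * h) + (2 * c + 1) / 9 * (h * h)"
    and "sq_width s i = 2 * (a * h) + h * h"
    unfolding sq_width_def a_def h_def by (simp_all add: field_simps)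
  ultimately show "sq_width s i / 9 \<le> sq_width (subdivide s i c) i"
    and "sq_width (subdivide s i c) i \<le> 5/9 * sq_width s i"
    using assms(2) by auto
qed

lemma balanced_subdivide_widest:
  assumes bal: "balanced m s" and digits: "cantor_digits s" and c: "c \<in> {0, 2}"
    and widest: "\<forall>j<m. sq_width s j \<le> sq_width s i"
  shows "balanced m (subdivide s i c)"
  unfolding balanced_def
proof (intro allI impI)
  fix j l assume j: "j < m" and l: "l < m"
  note new = sq_width_subdivide_bounds[OF left_end_nonneg[OF digits] c]
  have nonneg: "0 \<le> sq_width s k" for k using digits by (rule sq_width_nonneg)
  show "sq_width (subdivide s i c) j \<le> 9 * sq_width (subdivide s i c) l"
  proof (cases "j = i"; cases "l = i")
    assume "j = i" "l \<noteq> i"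
    moreover have "sq_width s i \<le> 9 * sq_width s l" using bal j l \<open>j = i\<close> by (simp add: balanced_def)
    ultimately show ?thesis using new(2)[of i] nonneg[of l] by simp
  next
    assume "j \<noteq> i" "l = i"
    moreover have "sq_width s j \<le> sq_width s i" using widest j by simp
    ultimately show ?thesis using new(1)[of i] by simp
  qed (use sq_width_nonneg[OF cantor_digits_subdivide[OF digits c]] bal j l in
        \<open>auto simp: balanced_def\<close>)
qed

lemma total_width_subdivide_widest:
  assumes digits: "cantor_digits s" and c: "c \<in> {0, 2}"
    and i: "i < m" and widest: "\<forall>j<m. sq_width s j \<le> sq_width s i"
  shows "total_width m (subdivide s i c) \<le> (1 - 4 / (9 * real m)) * total_width m s"
proof -
  have split: "total_width m t = sq_width t i + (\<Sum>j\<in>{..<m}-{i}. sq_width t j)" for t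
    unfolding total_width_def using i by (simp add: sum.remove)
  have rest: "(\<Sum>j\<in>{..<m}-{i}. sq_width (subdivide s i c) j) = (\<Sum>j\<in>{..<m}-{i}. sq_width s j)"
    by (intro sum.cong) auto
  have "total_width m s \<le> m * sq_width s i"
    unfolding total_width_def using widest sum_bounded_above[of "{..<m}" "sq_width s"] by simp
  then have "total_width m s / m \<le> sq_width s i"
    using i by (simp add: field_simps)
  then have "total_width m (subdivide s i c) \<le> total_width m s - 4/9 * (total_width m s / m)"
    using split[of s] split[of "subdivide s i c"] rest
      sq_width_subdivide_bounds(2)[OF left_end_nonneg[OF digits] c, of i]
    by linarith
  also have "\<dots> = (1 - 4 / (9 * real m)) * total_width m s"
    by (simp add: algebra_simps)
  finally show ?thesis .
qed

lemma subdivide_ranges_overlap: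
  assumes m: "4 \<le> m" and bal: "balanced m s" and i: "i < m"
  shows "lower_sum m (subdivide s i 2) \<le> upper_sum m (subdivide s i 0)"
proof -
  have "upper_sum m (subdivide s i 0) - lower_sum m (subdivide s i 2)
      = (\<Sum>j<m. if j = i then - sq_width s i / 3 else sq_width s j)"
    unfolding upper_sum_def lower_sum_def sum_subtractf[symmetric]
    by (intro sum.cong) (auto simp: sq_width_def power2_eq_square field_simps)
  also have "\<dots> = - sq_width s i / 3 + (\<Sum>j\<in>{..<m}-{i}. sq_width s j)"
    using i by (simp add: sum.remove)
  finally have diff: "upper_sum m (subdivide s i 0) - lower_sum m (subdivide s i 2)
      = - sq_width s i / 3 + (\<Sum>j\<in>{..<m}-{i}. sq_width s j)" .
  have nonneg: "0 \<le> sq_width s i" using bal i unfolding balanced_def by force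
  have "real (card ({..<m}-{i})) * (sq_width s i / 9) \<le> (\<Sum>j\<in>{..<m}-{i}. sq_width s j)"
    using bal i unfolding balanced_def by (intro sum_bounded_below) fastforce
  moreover have "card ({..<m}-{i}) = m - 1" using i by simp
  moreover have "3 * (sq_width s i / 9) \<le> real (m - 1) * (sq_width s i / 9)"
    using m nonneg by (intro mult_right_mono) auto
  ultimately have "3 * (sq_width s i / 9) \<le> (\<Sum>j\<in>{..<m}-{i}. sq_width s j)"
    by simp
  then show ?thesis using diff by simp
qed

lemma refine_cases: "\<exists>c \<in> {0, 2}. refine m y s = subdivide s (widest m s) c"
  unfolding refine_def Let_def by auto

lemma refine_brackets:
  assumes m: "4 \<le> m" and bal: "balanced m s" and y: "lower_sum m s \<le> y" "y \<le> upper_sum m s"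
  shows "lower_sum m (refine m y s) \<le> y" and "y \<le> upper_sum m (refine m y s)"
proof -
  define i where "i = widest m s"
  have i: "i < m" unfolding i_def using m by (intro widest) simp
  have "lower_sum m (subdivide s i 0) = lower_sum m s"
    unfolding lower_sum_def by (intro sum.cong) auto
  moreover have "upper_sum m (subdivide s i 2) = upper_sum m s"
    unfolding upper_sum_def by (intro sum.cong) (auto simp: algebra_simps)
  moreover note subdivide_ranges_overlap[OF m bal i]
  ultimately show "lower_sum m (refine m y s) \<le> y" and "y \<le> upper_sum m (refine m y s)"
    using y unfolding refine_def Let_def i_def[symmetric] by auto
qed

lemma cylinder_seq_invariants:
  assumes m: "4 \<le> m" and y: "0 \<le> y" "y \<le> m"
  shows "cantor_digits (cylinder_seq m y n) \<and> balanced m (cylinder_seq m y n)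
    \<and> lower_sum m (cylinder_seq m y n) \<le> y \<and> y \<le> upper_sum m (cylinder_seq m y n)
    \<and> total_width m (cylinder_seq m y n) \<le> m * (1 - 4 / (9 * real m)) ^ n"
proof (induction n)
  case 0
  have "left_end (cylinder_seq m y 0) j = 0" and "cyl_len (cylinder_seq m y 0) j = 1" for j
    unfolding cylinder_seq_def left_end_def cyl_len_def by simp_all
  then show ?case
    using y unfolding cantor_digits_def balanced_def lower_sum_def upper_sum_def total_width_def
      sq_width_def by (simp add: cylinder_seq_def)
next
  case (Suc n)
  let ?s = "cylinder_seq m y n"
  have seq: "cylinder_seq m y (Suc n) = refine m y ?s"
    unfolding cylinder_seq_def by simp
  obtain c where c: "c \<in> {0, 2}" and refine: "refine m y ?s = subdivide ?s (widest m ?s) c"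
    using refine_cases by blast
  have digits: "cantor_digits ?s" and bal: "balanced m ?s"
    and width: "total_width m ?s \<le> m * (1 - 4 / (9 * real m)) ^ n"
    and brackets: "lower_sum m ?s \<le> y" "y \<le> upper_sum m ?s"
    using Suc.IH by blast+
  have i: "widest m ?s < m" "\<forall>j<m. sq_width ?s j \<le> sq_width ?s (widest m ?s)"
    using m widest[where m = m and s = ?s] by auto
  have "total_width m (refine m y ?s) \<le> (1 - 4 / (9 * real m)) * total_width m ?s"
    using total_width_subdivide_widest[OF digits c i] unfolding refine .
  also have "\<dots> \<le> (1 - 4 / (9 * real m)) * (m * (1 - 4 / (9 * real m)) ^ n)"
    using width m by (intro mult_left_mono) (auto simp: field_simps)
  finally have "total_width m (refine m y ?s) \<le> m * (1 - 4 / (9 * real m)) ^ Suc n"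
    by (simp add: algebra_simps)
  then show ?case
    using refine_brackets[OF m bal brackets] cantor_digits_subdivide[OF digits c]
      balanced_subdivide_widest[OF bal digits c i(2)]
    unfolding seq refine by simp
qed

lemma depth_refine_mono: "depth s j \<le> depth (refine m y s) j"
  using refine_cases[of m y s] unfolding subdivide_def by auto

lemma digit_refine_below_depth: "i < depth s j \<Longrightarrow> digit (refine m y s) j i = digit s j i"
  using refine_cases[of m y s] unfolding subdivide_def by auto

lemma nested_cylinders_limit:
  assumes digits: "\<And>n. cantor_digits (s n)"
    and grow: "\<And>n j. depth (s n) j \<le> depth (s (Suc n)) j"
    and stable: "\<And>n j i. i < depth (s n) j \<Longrightarrow> digit (s (Suc n)) j i = digit (s n) j i"
  obtains x where "\<And>j. x j \<in> cantor_set"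
    and "\<And>n j. left_end (s n) j \<le> x j" and "\<And>n j. x j \<le> left_end (s n) j + cyl_len (s n) j"
proof -
  have "\<exists>D. (\<forall>n i. i < depth (s n) j \<longrightarrow> D i = digit (s n) j i) \<and> (\<forall>i. D i \<in> {0, 2})" for j
  proof -
    obtain D where prefix: "\<And>n i. i < depth (s n) j \<Longrightarrow> D i = digit (s n) j i"
      and from_seq: "\<And>i. \<exists>n. D i = digit (s n) j i"
      using prefix_stable_limit[where len = "\<lambda>n. depth (s n) j" and d = "\<lambda>n. digit (s n) j",
          OF grow stable] by blast
    have "D i \<in> {0, 2}" for i
      using from_seq[of i] digits unfolding cantor_digits_def by metis
    then show ?thesis using prefix by blast
  qed
  then obtain D where prefix: "\<And>j n i. i < depth (s n) j \<Longrightarrow> D j i = digit (s n) j i"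
    and D_digits: "\<And>j i. D j i \<in> {0, 2}"
    by metis
  show thesis
  proof
    show "ternary (D j) \<in> cantor_set" for j
      using D_digits by (intro ternary_in_cantor_set) simp
    show "left_end (s n) j \<le> ternary (D j)" "ternary (D j) \<le> left_end (s n) j + cyl_len (s n) j"
      for n j
      using ternary_prefix_bounds[of "D j" "depth (s n) j"] D_digits prefix
      unfolding left_end_def cyl_len_def by simp_all
  qed
qed

lemma sum_of_cantor_squares:
  fixes m :: nat and y :: real
  assumes m: "4 \<le> m" and y: "0 \<le> y" "y \<le> m"
  obtains x where "\<forall>j<m. x j \<in> cantor_set" and "y = (\<Sum>j<m. x j ^ 2)"
proof -
  let ?s = "cylinder_seq m y"
  have seq_Suc: "?s (Suc n) = refine m y (?s n)" for n
    unfolding cylinder_seq_def by simp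
  note inv = cylinder_seq_invariants[OF m y]
  have digits: "cantor_digits (?s n)" for n
    using inv by blast
  have grow: "depth (?s n) j \<le> depth (?s (Suc n)) j" for n j
    by (simp add: seq_Suc depth_refine_mono)
  have stable: "digit (?s (Suc n)) j i = digit (?s n) j i" if "i < depth (?s n) j" for n j i
    using that by (simp add: seq_Suc digit_refine_below_depth)
  obtain x where cantor: "\<And>j. x j \<in> cantor_set"
    and lower: "\<And>n j. left_end (?s n) j \<le> x j"
    and upper: "\<And>n j. x j \<le> left_end (?s n) j + cyl_len (?s n) j"
    using nested_cylinders_limit[of ?s, OF digits grow stable] by blast
  have left_nonneg: "0 \<le> left_end (?s n) j" for n j
    using digits by (rule left_end_nonneg)
  have x_nonneg: "0 \<le> x j" for j
    using left_nonneg[of 0 j] lower[of 0 j] by linarith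
  have "\<bar>y - (\<Sum>j<m. x j ^ 2)\<bar> \<le> m * (1 - 4 / (9 * real m)) ^ n" for n
  proof -
    have "lower_sum m (?s n) \<le> (\<Sum>j<m. x j ^ 2)" "(\<Sum>j<m. x j ^ 2) \<le> upper_sum m (?s n)"
      unfolding lower_sum_def upper_sum_def using lower upper left_nonneg x_nonneg
      by (auto intro!: sum_mono power_mono)
    then show ?thesis
      using inv[of n] upper_sum_minus_lower_sum[of m "?s n"] by linarith
  qed
  moreover have "0 \<le> 1 - 4 / (9 * real m)" "1 - 4 / (9 * real m) < 1"
    using m by (simp_all add: field_simps)
  ultimately have "y = (\<Sum>j<m. x j ^ 2)"
    by (intro eq_if_abs_diff_le_geometric)
  then show thesis using cantor by (intro that) auto
qed

theorem mainTheorem3: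
  fixes k :: nat
  assumes "k \<ge> 2"
  shows "{36/81 + 8/9 * (1 / 3^(2*k)) + 1 / 3^(2*k) ..
          36/81 + 4 / 3^(2*k+1) + 1 / 3^(4*k) + 2 / 3^(2*k) + 4/9 * (1 / 3^(2*k)) :: real}
         \<subseteq> {y1 + y2 + y3 + y4 | y1 y2 y3 y4.
              y1 \<in> cantor_sq \<and> y2 \<in> cantor_sq \<and> y3 \<in> cantor_sq \<and> y4 \<in> cantor_sq}"
proof
  fix y :: real
  assume y: "y \<in> {36/81 + 8/9 * (1 / 3^(2*k)) + 1 / 3^(2*k) ..
          36/81 + 4 / 3^(2*k+1) + 1 / 3^(4*k) + 2 / 3^(2*k) + 4/9 * (1 / 3^(2*k)) :: real}"
  have pow: "(9::real) \<le> 3 ^ n" if "2 \<le> n" for n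
    using power_increasing[OF that, of "3::real"] by simp
  have "4 / 3^(2*k+1) \<le> (4/9::real)" "1 / 3^(4*k) \<le> (1/9::real)"
    "2 / 3^(2*k) \<le> (2/9::real)" "1 / 3^(2*k) \<le> (1/9::real)"
    using pow[of "2*k+1"] pow[of "4*k"] pow[of "2*k"] assms by (simp_all add: field_simps)
  moreover have "0 \<le> (1::real) / 3^(2*k)" by simp
  ultimately have y_range: "0 \<le> y" "y \<le> 4"
    using y unfolding atLeastAtMost_iff by linarith+
  obtain x where "\<forall>j<4::nat. x j \<in> cantor_set" and "y = (\<Sum>j<4::nat. x j ^ 2)"
    by (rule sum_of_cantor_squares[of 4 y]) (use y_range in simp_all)
  then have "y = x 0 ^ 2 + x 1 ^ 2 + x 2 ^ 2 + x 3 ^ 2" and "x j ^ 2 \<in> cantor_sq" if "j < 4" for j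
    using that unfolding cantor_sq_def by (auto simp: eval_nat_numeral)
  then show "y \<in> {y1 + y2 + y3 + y4 | y1 y2 y3 y4.
              y1 \<in> cantor_sq \<and> y2 \<in> cantor_sq \<and> y3 \<in> cantor_sq \<and> y4 \<in> cantor_sq}"
    by fastforce
qed

end
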